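(* Consider the two-agent zero-sum dynamic game with $K$ stages, dynamics constraints, and control bound constraints $a^i_t\le u^i_t\le b^i_t$ described in the context. Then the states and controls of any local FBNE at which strict complementarity holds (and whose policies satisfy the standing policy assumption in the context) also satisfy the first-order necessary conditions (COL1)–(COL6) for a local OLNE of the game.
   Context: Two-agent zero-sum discrete-time dynamic game with horizon $K\in\mathbb N$. States $x_t\in\mathbb R^n$, known initial state $x_1$; controls $u^i_t\in\mathbb R^{m_i}$, $i\in\{1,2\}$, subject to componentwise bounds $a^i_t\le u^i_t\le b^i_t$. Dynamics $x_{t+1}=f_t(x_t,u^1_t,u^2_t)$, $f_t$ smooth. Agent 1 has stage costs $\ell_t(x_t,u^1_t,u^2_t)$ and terminal cost $\ell_{K+1}(x_{K+1})$; $\ell^1_t=\ell_t$, $\ell^2_t=-\ell_t$, sufficiently smooth (possibly nonconvex). For agent $i$, $-i$ is the other agent; reordered arguments $\ell^i_t(x_t,u^i_t,u^{-i}_t)$, $f_t(x_t,u^i_t,u^{-i}_t)$. $T_t:=\{t,\dots,K\}$. $\perp$ denotes componentwise complementarity. Open-loop problem of agent $i$: minimize $\sum_{t=1}^K\ell^i_t+\ell^i_{K+1}$ over $x_{2:K+1},u^i_{1:K}$ s.t. dynamics and $a^i_t\le u^i_t\le b^i_t$. First-order conditions: for each $i$ there exist $\lambda^i_t,\underline\nu^i_t,\bar\nu^i_t$ ($t\in[K]$) with (COL1) $\nabla_{x_t}\ell^i_t+(\nabla_{x_t}f_t)^\top\lambda^i_t-\lambda^i_{t-1}=0$, $t=2,\dots,K$;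 (COL2) $\nabla_{u^i_t}\ell^i_t+(\nabla_{u^i_t}f_t)^\top\lambda^i_t-\underline\nu^i_t+\bar\nu^i_t=0$, $t\in[K]$; (COL3) $\nabla_{x_{K+1}}\ell^i_{K+1}-\lambda^i_K=0$; (COL4) dynamics hold; (COL5) $a^i_t\le u^i_t\perp\underline\nu^i_t\ge0$; (COL6) $0\le\bar\nu^i_t\perp u^i_t\le b^i_t$. Feedback problem of agent $i$ at time $t$, given differentiable policies $\pi^{-i}_s$: minimize $\sum_{s=t}^K\ell^i_s+\ell^i_{K+1}$ over $u^i_{t:K},u^{-i}_{t+1:K},x_{t+1:K+1}$ s.t. dynamics ($s\in T_t$), $u^{-i}_s=\pi^{-i}_s(x_s)$ ($s\in T_{t+1}$), $a^i_s\le u^i_s\le b^i_s$ ($s\in T_t$). First-order (FBNE necessary) conditions: there exist $\lambda^i_s,\underline\nu^i_s,\bar\nu^i_s$ ($s\in T_t$), $\psi^i_s$ ($s\in T_{t+1}$) with (CFB1) $\nabla_{u^{-i}_s}\ell^i_s+(\nabla_{u^{-i}_s}f_s)^\top\lambda^i_s-\psi^i_s=0$, $s\in T_{t+1}$; (CFB2) $\nabla_{u^i_s}\ell^i_s+(\nabla_{u^i_s}f_s)^\top\lambda^i_s-\underline\nu^i_s+\bar\nu^i_s=0$, $s\in T_t$; (CFB3) $\nabla_{x_{K+1}}\ell^i_{K+1}-\lambda^i_K=0$; (CFB4) dynamics for $s\in T_t$; (CFB5) $u^{-i}_s=\pi^{-i}_s(x_s)$, $s\in T_{t+1}$; (CFB6)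 $a^i_s\le u^i_s\perp\underline\nu^i_s\ge0$, $0\le\bar\nu^i_s\perp u^i_s\le b^i_s$, $s\in T_t$; (CFB7) $\nabla_{x_s}\ell^i_s-\lambda^i_{s-1}+(\nabla_{x_s}f_s)^\top\lambda^i_s+(\nabla_{x_s}\pi^{-i}_s)^\top\psi^i_s=0$, $s\in T_{t+1}$. A local FBNE is a trajectory generated by policies $\pi^1_t,\pi^2_t$ that locally solves all these problems for all $t$ and $i$. Strict complementarity: for every component $j$, exactly one of $[u^i_s]_j-[a^i_s]_j$ and $[\underline\nu^i_s]_j$ is zero, and exactly one of $[b^i_s]_j-[u^i_s]_j$ and $[\bar\nu^i_s]_j$ is zero. Standing policy assumption (taken as a consequence of strict complementarity): whenever a bound on $[u^i_s]_j$ is active at the equilibrium, the $j$-th row of $\nabla_{x_s}\pi^i_s(x_s)$ is zero. *)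

theory Defs
  imports "HOL-Analysis.Analysis"
begin

definition grad :: "(real^'n \<Rightarrow> real) \<Rightarrow> real^'n \<Rightarrow> real^'n" where
  "grad g z = (\<chi> j. frechet_derivative g (at z) (axis j 1))"

definition jacT :: "(real^'n \<Rightarrow> real^'m) \<Rightarrow> real^'n \<Rightarrow> real^'m \<Rightarrow> real^'n" where
  "jacT F z lam = (\<chi> j. lam \<bullet> frechet_derivative F (at z) (axis j 1))"

definition box_compl :: "real^'m \<Rightarrow> real^'m \<Rightarrow> real^'m \<Rightarrow> real^'m \<Rightarrow> real^'m \<Rightarrow> bool" where
  "box_compl a b u nl nu \<longleftrightarrow>
     (\<forall>j. a$j \<le> u$j \<and> 0 \<le> nl$j \<and> (u$j - a$j) * nl$j = 0) \<and>
     (\<forall>j. 0 \<le> nu$j \<and> u$j \<le> b$j \<and> nu$j * (b$j - u$j) = 0)"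

definition strict_compl :: "real^'m \<Rightarrow> real^'m \<Rightarrow> real^'m \<Rightarrow> real^'m \<Rightarrow> real^'m \<Rightarrow> bool" where
  "strict_compl a b u nl nu \<longleftrightarrow>
     (\<forall>j. (u$j - a$j = 0) \<noteq> (nl$j = 0)) \<and> (\<forall>j. (b$j - u$j = 0) \<noteq> (nu$j = 0))"

text \<open>Generic agent "me" with own controls of type 'a and opponent controls of type 'b;
  F and L take reordered arguments (x, own control, other control); Lf is the terminal cost.\<close>

definition COL ::
  "nat \<Rightarrow> (nat \<Rightarrow> real^'n \<Rightarrow> real^'a \<Rightarrow> real^'b \<Rightarrow> real^'n) \<Rightarrow>
   (nat \<Rightarrow> real^'n \<Rightarrow> real^'a \<Rightarrow> real^'b \<Rightarrow> real) \<Rightarrow> (real^'n \<Rightarrow> real) \<Rightarrow>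
   (nat \<Rightarrow> real^'a) \<Rightarrow> (nat \<Rightarrow> real^'a) \<Rightarrow>
   (nat \<Rightarrow> real^'n) \<Rightarrow> (nat \<Rightarrow> real^'a) \<Rightarrow> (nat \<Rightarrow> real^'b) \<Rightarrow>
   (nat \<Rightarrow> real^'n) \<Rightarrow> (nat \<Rightarrow> real^'a) \<Rightarrow> (nat \<Rightarrow> real^'a) \<Rightarrow> bool" where
  "COL K F L Lf a b x u v lam nl nu \<longleftrightarrow>
     (\<forall>s\<in>{2..K}. grad (\<lambda>y. L s y (u s) (v s)) (x s)
                    + jacT (\<lambda>y. F s y (u s) (v s)) (x s) (lam s) - lam (s - 1) = 0) \<and>
     (\<forall>s\<in>{1..K}. grad (\<lambda>w. L s (x s) w (v s)) (u s)
                    + jacT (\<lambda>w. F s (x s) w (v s)) (u s) (lam s) - nl s + nu s = 0) \<and>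
     grad Lf (x (K + 1)) - lam K = 0 \<and>
     (\<forall>s\<in>{1..K}. x (s + 1) = F s (x s) (u s) (v s)) \<and>
     (\<forall>s\<in>{1..K}. box_compl (a s) (b s) (u s) (nl s) (nu s))"

definition CFB ::
  "nat \<Rightarrow> (nat \<Rightarrow> real^'n \<Rightarrow> real^'a \<Rightarrow> real^'b \<Rightarrow> real^'n) \<Rightarrow>
   (nat \<Rightarrow> real^'n \<Rightarrow> real^'a \<Rightarrow> real^'b \<Rightarrow> real) \<Rightarrow> (real^'n \<Rightarrow> real) \<Rightarrow>
   (nat \<Rightarrow> real^'a) \<Rightarrow> (nat \<Rightarrow> real^'a) \<Rightarrow> (nat \<Rightarrow> real^'n \<Rightarrow> real^'b) \<Rightarrow> nat \<Rightarrow>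
   (nat \<Rightarrow> real^'n) \<Rightarrow> (nat \<Rightarrow> real^'a) \<Rightarrow> (nat \<Rightarrow> real^'b) \<Rightarrow>
   (nat \<Rightarrow> real^'n) \<Rightarrow> (nat \<Rightarrow> real^'a) \<Rightarrow> (nat \<Rightarrow> real^'a) \<Rightarrow> (nat \<Rightarrow> real^'b) \<Rightarrow> bool" where
  "CFB K F L Lf a b piO t x u v lam nl nu psi \<longleftrightarrow>
     (\<forall>s\<in>{t+1..K}. grad (\<lambda>w. L s (x s) (u s) w) (v s)
                    + jacT (\<lambda>w. F s (x s) (u s) w) (v s) (lam s) - psi s = 0) \<and>
     (\<forall>s\<in>{t..K}. grad (\<lambda>w. L s (x s) w (v s)) (u s)
                    + jacT (\<lambda>w. F s (x s) w (v s)) (u s) (lam s) - nl s + nu s = 0) \<and>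
     grad Lf (x (K + 1)) - lam K = 0 \<and>
     (\<forall>s\<in>{t..K}. x (s + 1) = F s (x s) (u s) (v s)) \<and>
     (\<forall>s\<in>{t+1..K}. v s = piO s (x s)) \<and>
     (\<forall>s\<in>{t..K}. box_compl (a s) (b s) (u s) (nl s) (nu s)) \<and>
     (\<forall>s\<in>{t+1..K}. grad (\<lambda>y. L s y (u s) (v s)) (x s) - lam (s - 1)
                    + jacT (\<lambda>y. F s y (u s) (v s)) (x s) (lam s)
                    + jacT (piO s) (x s) (psi s) = 0)"

definition fb_feasible ::
  "nat \<Rightarrow> (nat \<Rightarrow> real^'n \<Rightarrow> real^'a \<Rightarrow> real^'b \<Rightarrow> real^'n) \<Rightarrow>
   (nat \<Rightarrow> real^'a) \<Rightarrow> (nat \<Rightarrow> real^'a) \<Rightarrow> (nat \<Rightarrow> real^'n \<Rightarrow> real^'b) \<Rightarrow> nat \<Rightarrow>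
   real^'n \<Rightarrow> real^'b \<Rightarrow>
   (nat \<Rightarrow> real^'n) \<Rightarrow> (nat \<Rightarrow> real^'a) \<Rightarrow> (nat \<Rightarrow> real^'b) \<Rightarrow> bool" where
  "fb_feasible K F a b piO t xt vt y w z \<longleftrightarrow>
     y t = xt \<and> z t = vt \<and>
     (\<forall>s\<in>{t..K}. y (s + 1) = F s (y s) (w s) (z s)) \<and>
     (\<forall>s\<in>{t+1..K}. z s = piO s (y s)) \<and>
     (\<forall>s\<in>{t..K}. a s \<le> w s \<and> w s \<le> b s)"

definition fb_cost ::
  "nat \<Rightarrow> (nat \<Rightarrow> real^'n \<Rightarrow> real^'a \<Rightarrow> real^'b \<Rightarrow> real) \<Rightarrow> (real^'n \<Rightarrow> real) \<Rightarrow> nat \<Rightarrow>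
   (nat \<Rightarrow> real^'n) \<Rightarrow> (nat \<Rightarrow> real^'a) \<Rightarrow> (nat \<Rightarrow> real^'b) \<Rightarrow> real" where
  "fb_cost K L Lf t y w z = (\<Sum>s=t..K. L s (y s) (w s) (z s)) + Lf (y (K + 1))"

definition fb_local_solution ::
  "nat \<Rightarrow> (nat \<Rightarrow> real^'n \<Rightarrow> real^'a \<Rightarrow> real^'b \<Rightarrow> real^'n) \<Rightarrow>
   (nat \<Rightarrow> real^'n \<Rightarrow> real^'a \<Rightarrow> real^'b \<Rightarrow> real) \<Rightarrow> (real^'n \<Rightarrow> real) \<Rightarrow>
   (nat \<Rightarrow> real^'a) \<Rightarrow> (nat \<Rightarrow> real^'a) \<Rightarrow> (nat \<Rightarrow> real^'n \<Rightarrow> real^'b) \<Rightarrow> nat \<Rightarrow>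
   (nat \<Rightarrow> real^'n) \<Rightarrow> (nat \<Rightarrow> real^'a) \<Rightarrow> (nat \<Rightarrow> real^'b) \<Rightarrow> bool" where
  "fb_local_solution K F L Lf a b piO t x u v \<longleftrightarrow>
     fb_feasible K F a b piO t (x t) (v t) x u v \<and>
     (\<exists>\<epsilon>>0. \<forall>y w z.
        fb_feasible K F a b piO t (x t) (v t) y w z \<and>
        (\<forall>s\<in>{t..K}. dist (w s) (u s) < \<epsilon>) \<and>
        (\<forall>s\<in>{t+1..K}. dist (z s) (v s) < \<epsilon>) \<and>
        (\<forall>s\<in>{t+1..K+1}. dist (y s) (x s) < \<epsilon>)
        \<longrightarrow> fb_cost K L Lf t x u v \<le> fb_cost K L Lf t y w z)"

definition local_FBNE ::
  "nat \<Rightarrow> (nat \<Rightarrow> real^'n \<Rightarrow> real^'m1 \<Rightarrow> real^'m2 \<Rightarrow> real^'n) \<Rightarrow>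
   (nat \<Rightarrow> real^'n \<Rightarrow> real^'m1 \<Rightarrow> real^'m2 \<Rightarrow> real) \<Rightarrow> (real^'n \<Rightarrow> real) \<Rightarrow>
   (nat \<Rightarrow> real^'m1) \<Rightarrow> (nat \<Rightarrow> real^'m1) \<Rightarrow> (nat \<Rightarrow> real^'m2) \<Rightarrow> (nat \<Rightarrow> real^'m2) \<Rightarrow>
   real^'n \<Rightarrow> (nat \<Rightarrow> real^'n \<Rightarrow> real^'m1) \<Rightarrow> (nat \<Rightarrow> real^'n \<Rightarrow> real^'m2) \<Rightarrow>
   (nat \<Rightarrow> real^'n) \<Rightarrow> (nat \<Rightarrow> real^'m1) \<Rightarrow> (nat \<Rightarrow> real^'m2) \<Rightarrow> bool" where
  "local_FBNE K f l lf a1 b1 a2 b2 x1 pi1 pi2 x u1 u2 \<longleftrightarrow>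
     (\<forall>t z. pi1 t differentiable (at z)) \<and> (\<forall>t z. pi2 t differentiable (at z)) \<and>
     x 1 = x1 \<and>
     (\<forall>t\<in>{1..K}. u1 t = pi1 t (x t) \<and> u2 t = pi2 t (x t) \<and>
                   x (t + 1) = f t (x t) (u1 t) (u2 t)) \<and>
     (\<forall>t\<in>{1..K}. fb_local_solution K f l lf a1 b1 pi2 t x u1 u2) \<and>
     (\<forall>t\<in>{1..K}. fb_local_solution K (\<lambda>s y w z. f s y z w) (\<lambda>s y w z. - l s y z w)
                     (\<lambda>y. - lf y) a2 b2 pi1 t x u2 u1)"

definition policy_assumption ::
  "nat \<Rightarrow> (nat \<Rightarrow> real^'a) \<Rightarrow> (nat \<Rightarrow> real^'a) \<Rightarrow> (nat \<Rightarrow> real^'n \<Rightarrow> real^'a) \<Rightarrow>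
   (nat \<Rightarrow> real^'n) \<Rightarrow> (nat \<Rightarrow> real^'a) \<Rightarrow> bool" where
  "policy_assumption K a b P x u \<longleftrightarrow>
     (\<forall>s\<in>{1..K}. \<forall>j. (u s $ j = a s $ j \<or> u s $ j = b s $ j) \<longrightarrow>
        (\<forall>k. frechet_derivative (P s) (at (x s)) (axis k 1) $ j = 0))"

end

theory Submission
  imports Defs
begin

text \<open>At time 1 each agent's feedback conditions already contain the open-loop conditions,
  up to the policy term \<open>(\<nabla>\<pi>\<^sup>-\<^sup>i)\<^sup>T\<psi>\<^sup>i\<close> in (CFB7).  In a zero-sum game the costates of
  the two agents are opposite; given this at stage \<open>s\<close>, (CFB1) of one agent and (CFB2) of the
  other agree up to sign, so \<open>\<psi>\<^sup>i\<close> equals the difference of the bound multipliers of agent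
  \<open>-i\<close>.  By complementarity that difference is supported on the active bounds, where the policy
  Jacobian has zero rows, so the policy term vanishes and (CFB7) of both agents passes the
  opposite-costate property from \<open>s\<close> to \<open>s - 1\<close>, starting from the terminal condition.\<close>

lemma grad_uminus:
  assumes "g differentiable (at z)"
  shows "grad (\<lambda>y. - g y) z = - grad g z"
proof -
  from assms obtain D where D: "(g has_derivative D) (at z)"
    unfolding differentiable_def by blast
  have "frechet_derivative (\<lambda>y. - g y) (at z) = (\<lambda>h. - D h)"
    using has_derivative_minus[OF D] by (metis frechet_derivative_at)
  moreover have "frechet_derivative g (at z) = D"
    using D by (metis frechet_derivative_at)
  ultimately show ?thesis
    unfolding grad_def by (simp add: vec_eq_iff)
qed

lemma jacT_uminus: "jacT F z (- lam) = - jacT F z lam"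
  unfolding jacT_def by (simp add: vec_eq_iff)

lemma jacT_eq_0_if_rows_vanish:
  assumes "\<forall>j. psi$j \<noteq> 0 \<longrightarrow> (\<forall>k. frechet_derivative P (at z) (axis k 1) $ j = 0)"
  shows "jacT P z psi = 0"
  unfolding jacT_def inner_vec_def vec_eq_iff
  using assms by (auto intro!: sum.neutral)

lemma box_compl_multiplier_imp_active:
  assumes "box_compl a b u nl nu" and "(nu - nl)$j \<noteq> 0"
  shows "u$j = a$j \<or> u$j = b$j"
  using assms unfolding box_compl_def
  by (metis diff_self mult_eq_0_iff right_minus_eq vector_minus_component)

lemma policy_assumption_jacT_multiplier:
  assumes "policy_assumption K a b P x u" and "s \<in> {1..K}"
    and "box_compl (a s) (b s) (u s) (nl s) (nu s)"
  shows "jacT (P s) (x s) (nu s - nl s) = 0"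
  using assms box_compl_multiplier_imp_active
  unfolding policy_assumption_def by (blast intro: jacT_eq_0_if_rows_vanish)

lemma differentiable_partial_maps:
  assumes "\<forall>z. (\<lambda>(y, v, w). g y v w) differentiable (at z)"
  shows "(\<lambda>y. g y v w) differentiable (at p)"
    and "(\<lambda>v. g y v w) differentiable (at q)"
    and "(\<lambda>w. g y v w) differentiable (at r)"
proof -
  have "(\<lambda>y. (y, v, w)) differentiable (at p)" "(\<lambda>v. (y, v, w)) differentiable (at q)"
    "(\<lambda>w. (y, v, w)) differentiable (at r)"
    by (intro derivative_intros)+
  from this[THEN differentiable_chain_at, OF assms[rule_format]]
  show "(\<lambda>y. g y v w) differentiable (at p)" "(\<lambda>v. g y v w) differentiable (at q)"
    "(\<lambda>w. g y v w) differentiable (at r)"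
    by (simp_all add: o_def)
qed

lemma CFB_imp_COL:
  assumes "CFB K F L Lf a b piO 1 x u v lam nl nu psi"
    and "\<forall>s\<in>{2..K}. jacT (piO s) (x s) (psi s) = 0"
  shows "COL K F L Lf a b x u v lam nl nu"
proof -
  have "grad (\<lambda>y. L s y (u s) (v s)) (x s) + jacT (\<lambda>y. F s y (u s) (v s)) (x s) (lam s)
          - lam (s - 1) = 0" if "s \<in> {2..K}" for s
    using assms that unfolding CFB_def by (auto simp: algebra_simps)
  with assms show ?thesis
    unfolding CFB_def COL_def by auto
qed

lemma COL_zero_horizon: "COL 0 F L Lf a b x u v (\<lambda>_. grad Lf (x 1)) nl nu"
  unfolding COL_def by simp

context
  fixes K :: nat
    and f :: "nat \<Rightarrow> real^'n \<Rightarrow> real^'m1 \<Rightarrow> real^'m2 \<Rightarrow> real^'n"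
    and l :: "nat \<Rightarrow> real^'n \<Rightarrow> real^'m1 \<Rightarrow> real^'m2 \<Rightarrow> real"
    and lf :: "real^'n \<Rightarrow> real"
    and a1 b1 nl1 nu1 :: "nat \<Rightarrow> real^'m1" and a2 b2 nl2 nu2 :: "nat \<Rightarrow> real^'m2"
    and pi1 :: "nat \<Rightarrow> real^'n \<Rightarrow> real^'m1" and pi2 :: "nat \<Rightarrow> real^'n \<Rightarrow> real^'m2"
    and x lam1 lam2 :: "nat \<Rightarrow> real^'n" and u1 psi2 :: "nat \<Rightarrow> real^'m1"
    and u2 psi1 :: "nat \<Rightarrow> real^'m2"
  assumes l_smooth: "\<forall>t z. (\<lambda>(y, w1, w2). l t y w1 w2) differentiable (at z)"
    and lf_smooth: "\<forall>z. lf differentiable (at z)"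
    and CFB1: "CFB K f l lf a1 b1 pi2 1 x u1 u2 lam1 nl1 nu1 psi1"
    and CFB2: "CFB K (\<lambda>s y w z. f s y z w) (\<lambda>s y w z. - l s y z w) (\<lambda>y. - lf y)
                 a2 b2 pi1 1 x u2 u1 lam2 nl2 nu2 psi2"
    and pol1: "policy_assumption K a1 b1 pi1 x u1"
    and pol2: "policy_assumption K a2 b2 pi2 x u2"
begin

lemma zero_sum_policy_terms_vanish:
  assumes s: "s \<in> {2..K}" and opposite: "lam2 s = - lam1 s"
  shows "jacT (pi2 s) (x s) (psi1 s) = 0" and "jacT (pi1 s) (x s) (psi2 s) = 0"
proof -
  note dl = differentiable_partial_maps[of "l s", OF spec[OF l_smooth]]
  have s1: "s \<in> {1..K}" and s2: "s \<in> {1+1..K}" using s by simp_all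
  have bc1: "box_compl (a1 s) (b1 s) (u1 s) (nl1 s) (nu1 s)"
    and bc2: "box_compl (a2 s) (b2 s) (u2 s) (nl2 s) (nu2 s)"
    using CFB1 CFB2 s1 unfolding CFB_def by blast+
  have "psi1 s = grad (\<lambda>w. l s (x s) (u1 s) w) (u2 s)
                 + jacT (\<lambda>w. f s (x s) (u1 s) w) (u2 s) (lam1 s)"
    using CFB1 s2 unfolding CFB_def by (fastforce simp: algebra_simps)
  also have "\<dots> = - (grad (\<lambda>w. - l s (x s) (u1 s) w) (u2 s)
                     + jacT (\<lambda>w. f s (x s) (u1 s) w) (u2 s) (lam2 s))"
    unfolding opposite grad_uminus[OF dl(3)] jacT_uminus by simp
  also have "\<dots> = nu2 s - nl2 s"
    using CFB2 s1 unfolding CFB_def by (fastforce simp: algebra_simps)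
  finally have "psi1 s = nu2 s - nl2 s" .
  then show "jacT (pi2 s) (x s) (psi1 s) = 0"
    using policy_assumption_jacT_multiplier[OF pol2 s1, of nl2 nu2] bc2 by simp
  have "psi2 s = grad (\<lambda>w. - l s (x s) w (u2 s)) (u1 s)
                 + jacT (\<lambda>w. f s (x s) w (u2 s)) (u1 s) (lam2 s)"
    using CFB2 s2 unfolding CFB_def by (fastforce simp: algebra_simps)
  also have "\<dots> = - (grad (\<lambda>w. l s (x s) w (u2 s)) (u1 s)
                     + jacT (\<lambda>w. f s (x s) w (u2 s)) (u1 s) (lam1 s))"
    unfolding opposite grad_uminus[OF dl(2)] jacT_uminus by simp
  also have "\<dots> = nu1 s - nl1 s"
    using CFB1 s1 unfolding CFB_def by (fastforce simp: algebra_simps)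
  finally have "psi2 s = nu1 s - nl1 s" .
  then show "jacT (pi1 s) (x s) (psi2 s) = 0"
    using policy_assumption_jacT_multiplier[OF pol1 s1, of nl1 nu1] bc1 by simp
qed

lemma zero_sum_costate_step:
  assumes s: "s \<in> {2..K}" and opposite: "lam2 s = - lam1 s"
  shows "lam2 (s - 1) = - lam1 (s - 1)"
proof -
  have s2: "s \<in> {1+1..K}" using s by simp
  note dl = differentiable_partial_maps[of "l s", OF spec[OF l_smooth]]
  note no_policy_terms = zero_sum_policy_terms_vanish[OF s opposite]
  have "lam2 (s - 1) = grad (\<lambda>y. - l s y (u1 s) (u2 s)) (x s)
                        + jacT (\<lambda>y. f s y (u1 s) (u2 s)) (x s) (lam2 s)"
    using CFB2 s2 no_policy_terms unfolding CFB_def by (fastforce simp: algebra_simps)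
  also have "\<dots> = - (grad (\<lambda>y. l s y (u1 s) (u2 s)) (x s)
                        + jacT (\<lambda>y. f s y (u1 s) (u2 s)) (x s) (lam1 s))"
    unfolding opposite grad_uminus[OF dl(1)] jacT_uminus by simp
  also have "\<dots> = - lam1 (s - 1)"
    using CFB1 s2 no_policy_terms unfolding CFB_def by (fastforce simp: algebra_simps)
  finally show ?thesis .
qed

lemma zero_sum_costates_opposite:
  assumes "s \<in> {1..K}"
  shows "lam2 s = - lam1 s"
proof -
  from assms have "s \<le> K" by simp
  then show ?thesis
  proof (induction rule: inc_induct)
    case base
    show ?case
      using CFB1 CFB2 grad_uminus[OF spec[OF lf_smooth]] unfolding CFB_def by simp
  next
    case (step n)
    with assms have "Suc n \<in> {2..K}" by simp
    from zero_sum_costate_step[OF this step.IH] show ?case by simp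
  qed
qed

lemma zero_sum_COL:
  shows "COL K f l lf a1 b1 x u1 u2 lam1 nl1 nu1"
    and "COL K (\<lambda>s y w z. f s y z w) (\<lambda>s y w z. - l s y z w) (\<lambda>y. - lf y)
           a2 b2 x u2 u1 lam2 nl2 nu2"
  using zero_sum_policy_terms_vanish zero_sum_costates_opposite
  by (auto intro!: CFB_imp_COL CFB1 CFB2)

end

text \<open>Only the time-1 multipliers of the two feedback problems are needed: the equilibrium
  property, smoothness of \<open>f\<close> and strict complementarity enter solely through their
  consequences \<open>sc1\<close>, \<open>sc2\<close>, \<open>pol1\<close> and \<open>pol2\<close>.\<close>

theorem theorem2:
  fixes K :: nat
    and f :: "nat \<Rightarrow> real^'n \<Rightarrow> real^'m1 \<Rightarrow> real^'m2 \<Rightarrow> real^'n"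
    and l :: "nat \<Rightarrow> real^'n \<Rightarrow> real^'m1 \<Rightarrow> real^'m2 \<Rightarrow> real"
    and lf :: "real^'n \<Rightarrow> real"
    and a1 b1 :: "nat \<Rightarrow> real^'m1" and a2 b2 :: "nat \<Rightarrow> real^'m2"
    and x1 :: "real^'n"
    and pi1 :: "nat \<Rightarrow> real^'n \<Rightarrow> real^'m1" and pi2 :: "nat \<Rightarrow> real^'n \<Rightarrow> real^'m2"
    and x :: "nat \<Rightarrow> real^'n" and u1 :: "nat \<Rightarrow> real^'m1" and u2 :: "nat \<Rightarrow> real^'m2"
  assumes f_smooth: "\<forall>t z. (\<lambda>(y, w1, w2). f t y w1 w2) differentiable (at z)"
    and l_smooth: "\<forall>t z. (\<lambda>(y, w1, w2). l t y w1 w2) differentiable (at z)"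
    and lf_smooth: "\<forall>z. lf differentiable (at z)"
    and fbne: "local_FBNE K f l lf a1 b1 a2 b2 x1 pi1 pi2 x u1 u2"
    and sc1: "\<forall>t\<in>{1..K}. \<exists>lam nl nu psi.
               CFB K f l lf a1 b1 pi2 t x u1 u2 lam nl nu psi \<and>
               (\<forall>s\<in>{t..K}. strict_compl (a1 s) (b1 s) (u1 s) (nl s) (nu s))"
    and sc2: "\<forall>t\<in>{1..K}. \<exists>lam nl nu psi.
               CFB K (\<lambda>s y w z. f s y z w) (\<lambda>s y w z. - l s y z w) (\<lambda>y. - lf y)
                   a2 b2 pi1 t x u2 u1 lam nl nu psi \<and>
               (\<forall>s\<in>{t..K}. strict_compl (a2 s) (b2 s) (u2 s) (nl s) (nu s))"
    and pol1: "policy_assumption K a1 b1 pi1 x u1"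
    and pol2: "policy_assumption K a2 b2 pi2 x u2"
  shows "(\<exists>lam nl nu. COL K f l lf a1 b1 x u1 u2 lam nl nu) \<and>
         (\<exists>lam nl nu. COL K (\<lambda>s y w z. f s y z w) (\<lambda>s y w z. - l s y z w) (\<lambda>y. - lf y)
                        a2 b2 x u2 u1 lam nl nu)"
proof (cases "K = 0")
  case True
  show ?thesis unfolding True by (intro conjI exI) (rule COL_zero_horizon)+
next
  case False
  then have "1 \<in> {1..K}" by simp
  then obtain lam1 nl1 nu1 psi1 lam2 nl2 nu2 psi2 where
    "CFB K f l lf a1 b1 pi2 1 x u1 u2 lam1 nl1 nu1 psi1"
    "CFB K (\<lambda>s y w z. f s y z w) (\<lambda>s y w z. - l s y z w) (\<lambda>y. - lf y)
       a2 b2 pi1 1 x u2 u1 lam2 nl2 nu2 psi2"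
    using sc1 sc2 by meson
  from zero_sum_COL[OF l_smooth lf_smooth this pol1 pol2] show ?thesis by blast
qed

end
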